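(* Let $\Gamma$ be a cocompact lattice in $PSL(2,\mathbb{R})$. Then there is no nonempty compact subset $V\subset\mathrm{Har}(\mathbb{D})^*$ with $\varphi\circ\gamma^{-1}\in V$ for all $\varphi\in V$ and $\gamma\in\Gamma$.
   Context: $\mathrm{Har}(\mathbb{D})$ is the set of complex-valued harmonic functions $\varphi$ on the open unit disc $\mathbb{D}$ with $\varphi(\mathbb{D})\subset\overline{\mathbb{D}}$, with the topology of uniform convergence on compact subsets; $\mathrm{Har}(\mathbb{D})^*$ is its subset of nonconstant functions. $PSL(2,\mathbb{R})\cong PSU(1,1)$ acts on $\mathbb{D}$ by $z\mapsto(\alpha z+\beta)/(\bar\beta z+\bar\alpha)$, $|\alpha|^2-|\beta|^2=1$. *)

theory Defs
  imports "HOL-Analysis.Analysis"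
begin

text \<open>An element of SU(1,1) is the matrix [[a, b], [cnj b, cnj a]] with |a|^2 - |b|^2 = 1,
  represented by the pair (a, b).  PSU(1,1) = SU(1,1) / {+1,-1}; a subgroup of PSU(1,1)
  is represented by its full preimage in SU(1,1), i.e. a subgroup containing -1.\<close>

definition SU11 :: "(complex \<times> complex) set" where
  "SU11 = {(a, b). (cmod a)^2 - (cmod b)^2 = 1}"

definition su_mult :: "complex \<times> complex \<Rightarrow> complex \<times> complex \<Rightarrow> complex \<times> complex" where
  "su_mult g h = (case g of (a1, b1) \<Rightarrow> case h of (a2, b2) \<Rightarrow>
      (a1 * a2 + b1 * cnj b2, a1 * b2 + b1 * cnj a2))"

definition su_inv :: "complex \<times> complex \<Rightarrow> complex \<times> complex" where
  "su_inv g = (case g of (a, b) \<Rightarrow> (cnj a, - b))"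

definition mob :: "complex \<times> complex \<Rightarrow> complex \<Rightarrow> complex" where
  "mob g z = (case g of (a, b) \<Rightarrow> (a * z + b) / (cnj b * z + cnj a))"

text \<open>A cocompact lattice in PSU(1,1) (= PSL(2,R)), given by its preimage in SU(1,1):
  a discrete subgroup with compact quotient (equivalently, SU(1,1) = K \<Gamma> for a compact K).\<close>
definition cocompact_lattice :: "(complex \<times> complex) set \<Rightarrow> bool" where
  "cocompact_lattice \<Gamma> \<longleftrightarrow>
     \<Gamma> \<subseteq> SU11 \<and> (1, 0) \<in> \<Gamma> \<and> (-1, 0) \<in> \<Gamma> \<and>
     (\<forall>g\<in>\<Gamma>. \<forall>h\<in>\<Gamma>. su_mult g h \<in> \<Gamma>) \<and> (\<forall>g\<in>\<Gamma>. su_inv g \<in> \<Gamma>) \<and>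
     (\<forall>g\<in>\<Gamma>. \<exists>e>0. \<forall>h\<in>\<Gamma>. dist h g < e \<longrightarrow> h = g) \<and>
     (\<exists>K. compact K \<and> K \<subseteq> SU11 \<and> (\<forall>g\<in>SU11. \<exists>k\<in>K. \<exists>\<gamma>\<in>\<Gamma>. g = su_mult k \<gamma>))"

definition dx :: "(complex \<Rightarrow> complex) \<Rightarrow> complex \<Rightarrow> complex" where
  "dx f z = vector_derivative (\<lambda>t::real. f (z + of_real t)) (at 0)"

definition dy :: "(complex \<Rightarrow> complex) \<Rightarrow> complex \<Rightarrow> complex" where
  "dy f z = vector_derivative (\<lambda>t::real. f (z + \<i> * of_real t)) (at 0)"

definition has_partials :: "(complex \<Rightarrow> complex) \<Rightarrow> complex \<Rightarrow> bool" where
  "has_partials f z \<longleftrightarrow>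
     (\<lambda>t::real. f (z + of_real t)) differentiable (at 0) \<and>
     (\<lambda>t::real. f (z + \<i> * of_real t)) differentiable (at 0)"

definition harmonic_on :: "(complex \<Rightarrow> complex) \<Rightarrow> complex set \<Rightarrow> bool" where
  "harmonic_on f S \<longleftrightarrow>
     (\<forall>z\<in>S. has_partials f z \<and> has_partials (dx f) z \<and> has_partials (dy f) z) \<and>
     continuous_on S (dx (dx f)) \<and> continuous_on S (dy (dx f)) \<and>
     continuous_on S (dx (dy f)) \<and> continuous_on S (dy (dy f)) \<and>
     (\<forall>z\<in>S. dx (dx f) z + dy (dy f) z = 0)"

definition Har :: "(complex \<Rightarrow> complex) set" where
  "Har = {\<phi>. harmonic_on \<phi> (ball 0 1) \<and> \<phi> ` ball 0 1 \<subseteq> cball 0 1}"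

definition Har_star :: "(complex \<Rightarrow> complex) set" where
  "Har_star = {\<phi>\<in>Har. \<not> (\<exists>c. \<forall>z\<in>ball 0 1. \<phi> z = c)}"

definition lu_topology :: "(complex \<Rightarrow> complex) topology" where
  "lu_topology = topology (\<lambda>U. \<forall>\<phi>\<in>U. \<exists>K e. compact K \<and> K \<subseteq> ball 0 1 \<and> e > 0 \<and>
       {\<psi>. \<forall>z\<in>K. cmod (\<psi> z - \<phi> z) < e} \<subseteq> U)"

end

theory Submission
  imports Defs "HOL-Complex_Analysis.Complex_Analysis"
begin

text \<open>Choose a compact D in the disc whose \<Gamma>-translates cover the disc (possible since \<Gamma> is
  cocompact) and let F \<psi> be the maximum of |\<psi>| on D. F is continuous for the topology of locally
  uniform convergence, so on a compact invariant V it attains its maximum at some \<psi>0, say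
  F \<psi>0 = |\<psi>0 w0| with w0 \<in> D. Since the translates \<psi>0 \<circ> \<gamma>^-1 lie in V, every value of \<psi>0 on the
  disc is bounded by |\<psi>0 w0|, and the maximum modulus principle for harmonic functions makes \<psi>0
  constant. That principle is reduced to the holomorphic case by writing a harmonic f on a convex
  set as (H1 + cnj H2) / 2 + c, where H1, H2 are primitives of f_x - i f_y and cnj (f_x + i f_y);
  these are holomorphic by Schwarz's theorem and the Laplace equation.\<close>

section \<open>Partial derivatives\<close>

lemma has_vector_derivative_line_shift:
  fixes f :: "complex \<Rightarrow> complex"
  assumes "((\<lambda>t::real. f (w + d * of_real s + d * of_real t)) has_vector_derivative v) (at 0)"
  shows "((\<lambda>t::real. f (w + d * of_real t)) has_vector_derivative v) (at s)"
proof -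
  have "((\<lambda>t::real. f (w + d * of_real s + d * of_real t)) \<circ> (\<lambda>t. t - s) has_vector_derivative v) (at s)"
  proof (rule vector_diff_chain_at[where f'=1 and g'=v, simplified])
    show "((\<lambda>t::real. t - s) has_vector_derivative 1) (at s)"
      by (auto intro!: derivative_eq_intros)
  qed (use assms in simp)
  moreover have "(\<lambda>t::real. f (w + d * of_real s + d * of_real t)) \<circ> (\<lambda>t. t - s) = (\<lambda>t. f (w + d * of_real t))"
    by (auto simp: algebra_simps)
  ultimately show ?thesis by simp
qed

lemma dx_has_vector_derivative:
  assumes "has_partials f (w + of_real s)"
  shows "((\<lambda>t::real. f (w + of_real t)) has_vector_derivative dx f (w + of_real s)) (at s)"
  using has_vector_derivative_line_shift[of f w 1 s] assms
  by (simp add: has_partials_def dx_def vector_derivative_works[symmetric])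

lemma dy_has_vector_derivative:
  assumes "has_partials f (w + \<i> * of_real s)"
  shows "((\<lambda>t::real. f (w + \<i> * of_real t)) has_vector_derivative dy f (w + \<i> * of_real s)) (at s)"
  using has_vector_derivative_line_shift[of f w \<i> s] assms
  by (simp add: has_partials_def dy_def vector_derivative_works[symmetric])

lemma closed_segment_0_abs_le: "(t::real) \<in> closed_segment 0 a \<Longrightarrow> \<bar>t\<bar> \<le> \<bar>a\<bar>"
  by (auto simp: closed_segment_eq_real_ivl split: if_splits)

lemma mean_value_bound_affine:
  fixes p :: "real \<Rightarrow> 'a::real_normed_vector"
  assumes deriv: "\<And>t. t \<in> closed_segment a b \<Longrightarrow> (p has_vector_derivative p' t) (at t)"
    and bound: "\<And>t. t \<in> closed_segment a b \<Longrightarrow> norm (p' t - c) \<le> B"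
  shows "norm (p b - p a - (b - a) *\<^sub>R c) \<le> B * \<bar>b - a\<bar>"
proof -
  have "norm ((\<lambda>t. p t - t *\<^sub>R c) b - (\<lambda>t. p t - t *\<^sub>R c) a) \<le> B * norm (b - a)"
  proof (rule differentiable_bound[where S="closed_segment a b" and f'="\<lambda>t h. h *\<^sub>R (p' t - c)"])
    fix t assume t: "t \<in> closed_segment a b"
    have "(p has_derivative (\<lambda>h. h *\<^sub>R p' t)) (at t within closed_segment a b)"
      using deriv[OF t] by (simp add: has_vector_derivative_def has_derivative_at_withinI)
    then show "((\<lambda>t. p t - t *\<^sub>R c) has_derivative (\<lambda>h. h *\<^sub>R (p' t - c))) (at t within closed_segment a b)"
      by (auto intro!: derivative_eq_intros simp: algebra_simps)
    show "onorm (\<lambda>h. h *\<^sub>R (p' t - c)) \<le> B"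
      using bound[OF t] order_trans[OF norm_ge_zero bound[OF t]]
      by (intro onorm_bound) (auto simp: mult.commute[of B] intro: mult_left_mono)
  qed auto
  then show ?thesis by (simp add: algebra_simps)
qed

lemma partials_increment_bound:
  fixes f :: "complex \<Rightarrow> complex"
  assumes partials: "\<And>w. cmod (w - z) \<le> cmod (y - z) \<Longrightarrow> has_partials f w"
    and dx_near: "\<And>w. cmod (w - z) \<le> cmod (y - z) \<Longrightarrow> cmod (dx f w - dx f z) \<le> e"
    and dy_near: "\<And>w. cmod (w - z) \<le> cmod (y - z) \<Longrightarrow> cmod (dy f w - dy f z) \<le> e"
  shows "cmod (f y - f z - (Re (y - z) *\<^sub>R dx f z + Im (y - z) *\<^sub>R dy f z)) \<le> 2 * e * cmod (y - z)"
proof -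
  define a b where "a = Re (y - z)" and "b = Im (y - z)"
  have e: "e \<ge> 0" using dx_near[of z] by simp
  \<comment> \<open>Walk from z horizontally to z + a, then vertically to y = z + a + i b.\<close>
  have horizontal: "cmod (f (z + of_real a) - f (z + of_real 0) - (a - 0) *\<^sub>R dx f z) \<le> e * \<bar>a - 0\<bar>"
  proof (rule mean_value_bound_affine[where p'="\<lambda>t. dx f (z + of_real t)"])
    fix t assume t: "t \<in> closed_segment 0 a"
    have "cmod ((z + of_real t) - z) \<le> cmod (y - z)"
      using closed_segment_0_abs_le[OF t] abs_Re_le_cmod[of "y - z"] by (simp add: a_def)
    then show "((\<lambda>t. f (z + of_real t)) has_vector_derivative dx f (z + of_real t)) (at t)"
      and "cmod (dx f (z + of_real t) - dx f z) \<le> e"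
      using dx_has_vector_derivative partials dx_near by auto
  qed
  have vertical: "cmod (f (z + of_real a + \<i> * of_real b) - f (z + of_real a + \<i> * of_real 0)
      - (b - 0) *\<^sub>R dy f z) \<le> e * \<bar>b - 0\<bar>"
  proof (rule mean_value_bound_affine[where p'="\<lambda>t. dy f (z + of_real a + \<i> * of_real t)"])
    fix t assume t: "t \<in> closed_segment 0 b"
    have "cmod (of_real a + \<i> * of_real t) = sqrt (a\<^sup>2 + t\<^sup>2)" by (simp add: cmod_def)
    also have "\<dots> \<le> sqrt (a\<^sup>2 + b\<^sup>2)"
      using closed_segment_0_abs_le[OF t] by (simp add: abs_le_square_iff)
    also have "\<dots> = cmod (y - z)" by (simp add: cmod_def a_def b_def)
    finally have "cmod ((z + of_real a + \<i> * of_real t) - z) \<le> cmod (y - z)"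
      by (simp add: algebra_simps)
    then show "((\<lambda>t. f (z + of_real a + \<i> * of_real t)) has_vector_derivative
          dy f (z + of_real a + \<i> * of_real t)) (at t)"
      and "cmod (dy f (z + of_real a + \<i> * of_real t) - dy f z) \<le> e"
      using dy_has_vector_derivative partials dy_near by auto
  qed
  have "y = z + of_real a + \<i> * of_real b" by (simp add: a_def b_def complex_eq_iff)
  then have "f y - f z - (Re (y - z) *\<^sub>R dx f z + Im (y - z) *\<^sub>R dy f z)
      = (f (z + of_real a + \<i> * of_real b) - f (z + of_real a + \<i> * of_real 0) - (b - 0) *\<^sub>R dy f z)
        + (f (z + of_real a) - f (z + of_real 0) - (a - 0) *\<^sub>R dx f z)"
    by (simp add: a_def b_def)
  also have "cmod \<dots> \<le> e * \<bar>b - 0\<bar> + e * \<bar>a - 0\<bar>"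
    by (rule order_trans[OF norm_triangle_ineq add_mono[OF vertical horizontal]])
  also have "\<dots> \<le> e * cmod (y - z) + e * cmod (y - z)"
    using abs_Re_le_cmod[of "y - z"] abs_Im_le_cmod[of "y - z"] e
    by (intro add_mono mult_left_mono) (auto simp: a_def b_def)
  finally show ?thesis by simp
qed

lemma continuous_partials_imp_has_derivative:
  fixes f :: "complex \<Rightarrow> complex"
  assumes S: "open S" and partials: "\<And>w. w \<in> S \<Longrightarrow> has_partials f w"
    and cont_dx: "continuous_on S (dx f)" and cont_dy: "continuous_on S (dy f)" and z: "z \<in> S"
  shows "(f has_derivative (\<lambda>h. Re h *\<^sub>R dx f z + Im h *\<^sub>R dy f z)) (at z)"
  unfolding has_derivative_at_alt
proof (intro conjI allI impI)
  show "bounded_linear (\<lambda>h. Re h *\<^sub>R dx f z + Im h *\<^sub>R dy f z)"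
    by (intro bounded_linear_add bounded_linear_compose[OF bounded_linear_scaleR_left]
        bounded_linear_Re bounded_linear_Im)
  fix e :: real assume e: "e > 0"
  obtain d0 where d0: "d0 > 0" "ball z d0 \<subseteq> S" using S z open_contains_ball by blast
  obtain d1 where d1: "d1 > 0" "\<And>w. w \<in> S \<Longrightarrow> dist w z < d1 \<Longrightarrow> dist (dx f w) (dx f z) < e/2"
    using cont_dx z e unfolding continuous_on_iff by (meson half_gt_zero)
  obtain d2 where d2: "d2 > 0" "\<And>w. w \<in> S \<Longrightarrow> dist w z < d2 \<Longrightarrow> dist (dy f w) (dy f z) < e/2"
    using cont_dy z e unfolding continuous_on_iff by (meson half_gt_zero)
  show "\<exists>d>0. \<forall>y. cmod (y - z) < d \<longrightarrow>
      cmod (f y - f z - (Re (y - z) *\<^sub>R dx f z + Im (y - z) *\<^sub>R dy f z)) \<le> e * cmod (y - z)"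
  proof (intro exI[of _ "min d0 (min d1 d2)"] conjI allI impI)
    fix y assume y: "cmod (y - z) < min d0 (min d1 d2)"
    have near: "w \<in> S" "dist w z < d1" "dist w z < d2" if "cmod (w - z) \<le> cmod (y - z)" for w
      using that y d0 by (force simp: dist_norm norm_minus_commute)+
    have "cmod (f y - f z - (Re (y - z) *\<^sub>R dx f z + Im (y - z) *\<^sub>R dy f z)) \<le> 2 * (e/2) * cmod (y - z)"
      using partials d1(2) d2(2) near by (intro partials_increment_bound) (force simp: dist_norm)+
    then show "cmod (f y - f z - (Re (y - z) *\<^sub>R dx f z + Im (y - z) *\<^sub>R dy f z)) \<le> e * cmod (y - z)"
      by simp
  qed (use d0 d1 d2 in auto)
qed

lemma second_difference_estimate:
  fixes f g L :: "complex \<Rightarrow> complex"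
  assumes t: "t \<ge> 0" and u: "cmod u = 1" and v: "cmod v = 1" and e: "e \<ge> 0" and L: "linear L"
    and deriv: "\<And>w s. cmod (w + u * of_real s - z) \<le> 2 * t \<Longrightarrow>
      ((\<lambda>r. f (w + u * of_real r)) has_vector_derivative g (w + u * of_real s)) (at s)"
    and remainder: "\<And>h. cmod h \<le> 2 * t \<Longrightarrow> cmod (g (z + h) - g z - L h) \<le> e * cmod h"
  shows "cmod (f (z + v * of_real t + u * of_real t) - f (z + u * of_real t) - f (z + v * of_real t) + f z
           - of_real t * L (v * of_real t)) \<le> 3 * e * t\<^sup>2"
proof -
  define p where "p s = f (z + v * of_real t + u * of_real s) - f (z + u * of_real s)" for s
  have "cmod (p t - p 0 - (t - 0) *\<^sub>R L (v * of_real t)) \<le> (3 * e * t) * \<bar>t - 0\<bar>"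
  proof (rule mean_value_bound_affine[where p'="\<lambda>s. g (z + v * of_real t + u * of_real s) - g (z + u * of_real s)"])
    fix s assume "s \<in> closed_segment 0 t"
    then have s: "\<bar>s\<bar> \<le> t" using closed_segment_0_abs_le t by fastforce
    have far: "cmod (v * of_real t + u * of_real s) \<le> 2 * t"
      using norm_triangle_ineq[of "v * of_real t" "u * of_real s"] s t u v by (simp add: norm_mult)
    have close: "cmod (u * of_real s) \<le> t" using s u by (simp add: norm_mult)
    show "(p has_vector_derivative g (z + v * of_real t + u * of_real s) - g (z + u * of_real s)) (at s)"
      unfolding p_def using far close t
      by (intro has_vector_derivative_diff deriv) (simp_all add: algebra_simps)
    have "cmod (g (z + (v * of_real t + u * of_real s)) - g z - L (v * of_real t + u * of_real s))
        \<le> e * cmod (v * of_real t + u * of_real s)"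
      by (rule remainder[OF far])
    also have "\<dots> \<le> e * (2 * t)" by (rule mult_left_mono[OF far e])
    finally have r1: "cmod (g (z + (v * of_real t + u * of_real s)) - g z - L (v * of_real t + u * of_real s))
        \<le> e * (2 * t)" .
    have "cmod (g (z + u * of_real s) - g z - L (u * of_real s)) \<le> e * cmod (u * of_real s)"
      by (rule remainder) (use close t in linarith)
    also have "\<dots> \<le> e * t" by (rule mult_left_mono[OF close e])
    finally have r2: "cmod (g (z + u * of_real s) - g z - L (u * of_real s)) \<le> e * t" .
    have "g (z + v * of_real t + u * of_real s) - g (z + u * of_real s) - L (v * of_real t)
        = (g (z + (v * of_real t + u * of_real s)) - g z - L (v * of_real t + u * of_real s))
          - (g (z + u * of_real s) - g z - L (u * of_real s))"
      using linear_add[OF L] by (simp add: algebra_simps)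
    also have "cmod \<dots> \<le> e * (2 * t) + e * t"
      by (rule order_trans[OF norm_triangle_ineq4 add_mono[OF r1 r2]])
    finally show "cmod (g (z + v * of_real t + u * of_real s) - g (z + u * of_real s) - L (v * of_real t)) \<le> 3 * e * t"
      by simp
  qed
  then show ?thesis
    using t by (simp add: p_def power2_eq_square scaleR_conv_of_real algebra_simps)
qed

lemma second_difference_small:
  fixes f g L :: "complex \<Rightarrow> complex"
  assumes S: "open S" "z \<in> S" and u: "cmod u = 1" and v: "cmod v = 1"
    and deriv: "\<And>w s. w + u * of_real s \<in> S \<Longrightarrow>
      ((\<lambda>r. f (w + u * of_real r)) has_vector_derivative g (w + u * of_real s)) (at s)"
    and L: "(g has_derivative L) (at z)" and e: "e > 0"
  obtains d where "d > 0" "\<And>t. 0 \<le> t \<Longrightarrow> t < d \<Longrightarrow>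
    cmod (f (z + v * of_real t + u * of_real t) - f (z + u * of_real t) - f (z + v * of_real t) + f z
      - of_real t * L (v * of_real t)) \<le> 3 * e * t\<^sup>2"
proof -
  obtain d0 where d0: "d0 > 0" "ball z d0 \<subseteq> S" using S open_contains_ball by blast
  obtain d1 where d1: "d1 > 0" "\<And>y. cmod (y - z) < d1 \<Longrightarrow> cmod (g y - g z - L (y - z)) \<le> e * cmod (y - z)"
    using L e unfolding has_derivative_at_alt by meson
  show thesis
  proof (rule that[of "min d0 d1 / 2"])
    fix t assume t: "0 \<le> t" "t < min d0 d1 / 2"
    show "cmod (f (z + v * of_real t + u * of_real t) - f (z + u * of_real t) - f (z + v * of_real t) + f z
      - of_real t * L (v * of_real t)) \<le> 3 * e * t\<^sup>2"
    proof (rule second_difference_estimate[OF t(1) u v less_imp_le[OF e] has_derivative_linear[OF L]])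
      show "((\<lambda>r. f (w + u * of_real r)) has_vector_derivative g (w + u * of_real s)) (at s)"
        if "cmod (w + u * of_real s - z) \<le> 2 * t" for w s
        using that t d0(2) by (intro deriv) (auto simp: dist_norm norm_minus_commute)
      show "cmod (g (z + h) - g z - L h) \<le> e * cmod h" if "cmod h \<le> 2 * t" for h
        using d1(2)[of "z + h"] that t by simp
    qed
  qed (use d0 d1 in simp)
qed

lemma mixed_partials_eq:
  fixes f :: "complex \<Rightarrow> complex"
  assumes S: "open S" and z: "z \<in> S" and partials: "\<And>w. w \<in> S \<Longrightarrow> has_partials f w"
    and DX: "(dx f has_derivative (\<lambda>h. Re h *\<^sub>R a1 + Im h *\<^sub>R a2)) (at z)"
    and DY: "(dy f has_derivative (\<lambda>h. Re h *\<^sub>R b1 + Im h *\<^sub>R b2)) (at z)"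
  shows "a2 = b1"
proof -
  \<comment> \<open>The second difference \<Delta> t is t^2 a2 + o(t^2) via dx f and t^2 b1 + o(t^2) via dy f.\<close>
  define \<Delta> where "\<Delta> t = f (z + \<i> * of_real t + of_real t) - f (z + of_real t) - f (z + \<i> * of_real t) + f z"
    for t :: real
  have deriv_x: "((\<lambda>r. f (w + 1 * of_real r)) has_vector_derivative dx f (w + 1 * of_real s)) (at s)"
    if "w + 1 * of_real s \<in> S" for w s
    using dx_has_vector_derivative partials that by simp
  have deriv_y: "((\<lambda>r. f (w + \<i> * of_real r)) has_vector_derivative dy f (w + \<i> * of_real s)) (at s)"
    if "w + \<i> * of_real s \<in> S" for w s
    using dy_has_vector_derivative partials that by simp
  have estimate: "cmod (a2 - b1) \<le> 6 * e" if e: "e > 0" for e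
  proof -
    obtain dX where "dX > 0" and dX: "\<And>t. 0 \<le> t \<Longrightarrow> t < dX \<Longrightarrow>
        cmod (f (z + \<i> * of_real t + 1 * of_real t) - f (z + 1 * of_real t) - f (z + \<i> * of_real t) + f z
          - of_real t * (Re (\<i> * of_real t) *\<^sub>R a1 + Im (\<i> * of_real t) *\<^sub>R a2)) \<le> 3 * e * t\<^sup>2"
      using second_difference_small[OF S z norm_one norm_ii deriv_x DX e] by blast
    obtain dY where "dY > 0" and dY: "\<And>t. 0 \<le> t \<Longrightarrow> t < dY \<Longrightarrow>
        cmod (f (z + 1 * of_real t + \<i> * of_real t) - f (z + \<i> * of_real t) - f (z + 1 * of_real t) + f z
          - of_real t * (Re (1 * of_real t) *\<^sub>R b1 + Im (1 * of_real t) *\<^sub>R b2)) \<le> 3 * e * t\<^sup>2"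
      using second_difference_small[OF S z norm_ii norm_one deriv_y DY e] by blast
    define t where "t = min dX dY / 2"
    have t: "0 < t" "t < dX" "t < dY" using \<open>dX > 0\<close> \<open>dY > 0\<close> by (auto simp: t_def)
    have "of_real (t\<^sup>2) * (a2 - b1) = (\<Delta> t - of_real t * of_real t * b1) - (\<Delta> t - of_real t * of_real t * a2)"
      by (simp add: power2_eq_square algebra_simps)
    then have "t\<^sup>2 * cmod (a2 - b1) = cmod ((\<Delta> t - of_real t * of_real t * b1) - (\<Delta> t - of_real t * of_real t * a2))"
      by (metis abs_power2 norm_mult norm_of_real)
    also have "\<dots> \<le> 3 * e * t\<^sup>2 + 3 * e * t\<^sup>2"
      using dY[of t] dX[of t] t
      by (intro order_trans[OF norm_triangle_ineq4 add_mono])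
        (simp_all add: \<Delta>_def scaleR_conv_of_real algebra_simps)
    finally show ?thesis using t by (simp add: power2_eq_square)
  qed
  have "cmod (a2 - b1) \<le> 0"
  proof (rule field_le_epsilon)
    fix e :: real assume "e > 0"
    then show "cmod (a2 - b1) \<le> 0 + e" using estimate[of "e / 6"] by simp
  qed
  then show ?thesis by simp
qed

section \<open>The maximum modulus principle for harmonic functions\<close>

lemma holomorphic_Re_maximum:
  assumes G: "G holomorphic_on S" and S: "open S" "connected S"
    and w0: "w0 \<in> S" and max: "\<And>z. z \<in> S \<Longrightarrow> Re (G z) \<le> Re (G w0)" and z: "z \<in> S"
  shows "Re (G z) = Re (G w0)"
proof -
  have "(\<lambda>z. exp (G z)) constant_on S"
    using G S w0 max by (intro maximum_modulus_principle[where U=S and \<xi>=w0]) (auto intro!: holomorphic_intros)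
  then have "exp (G z) = exp (G w0)" using z w0 by (auto simp: constant_on_def)
  then have "exp (Re (G z)) = exp (Re (G w0))" by (metis norm_exp_eq_Re)
  then show ?thesis by simp
qed

context
  fixes f :: "complex \<Rightarrow> complex" and S :: "complex set"
  assumes harmonic: "harmonic_on f S" and S: "open S"
begin

lemma harmonic_on_has_partials:
  assumes "w \<in> S"
  shows "has_partials f w" "has_partials (dx f) w" "has_partials (dy f) w"
  using harmonic assms unfolding harmonic_on_def by auto

lemma harmonic_on_dx_has_derivative:
  "z \<in> S \<Longrightarrow> (dx f has_derivative (\<lambda>h. Re h *\<^sub>R dx (dx f) z + Im h *\<^sub>R dy (dx f) z)) (at z)"
  using harmonic by (intro continuous_partials_imp_has_derivative[OF S] harmonic_on_has_partials)
    (auto simp: harmonic_on_def)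

lemma harmonic_on_dy_has_derivative:
  "z \<in> S \<Longrightarrow> (dy f has_derivative (\<lambda>h. Re h *\<^sub>R dx (dy f) z + Im h *\<^sub>R dy (dy f) z)) (at z)"
  using harmonic by (intro continuous_partials_imp_has_derivative[OF S] harmonic_on_has_partials)
    (auto simp: harmonic_on_def)

lemma harmonic_on_has_derivative:
  "z \<in> S \<Longrightarrow> (f has_derivative (\<lambda>h. Re h *\<^sub>R dx f z + Im h *\<^sub>R dy f z)) (at z)"
  using harmonic_on_dx_has_derivative harmonic_on_dy_has_derivative
  by (intro continuous_partials_imp_has_derivative[OF S] harmonic_on_has_partials
      continuous_at_imp_continuous_on ballI) (auto dest: has_derivative_continuous)

lemma harmonic_on_imp_continuous_on: "continuous_on S f"
  using harmonic_on_has_derivative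
  by (intro continuous_at_imp_continuous_on ballI) (meson has_derivative_continuous)

text \<open>These are the Cauchy-Riemann equations for f_x - i f_y and for cnj (f_x + i f_y).\<close>
lemma harmonic_on_second_derivatives:
  assumes z: "z \<in> S"
  defines "A \<equiv> dx (dx f) z" and "B \<equiv> dx (dy f) z"
  shows "(dx f has_derivative (\<lambda>h. Re h *\<^sub>R A + Im h *\<^sub>R B)) (at z)"
    and "(dy f has_derivative (\<lambda>h. Re h *\<^sub>R B - Im h *\<^sub>R A)) (at z)"
proof -
  have "dy (dx f) z = B"
    unfolding B_def using harmonic_on_has_partials(1)
    by (rule mixed_partials_eq[OF S z _ harmonic_on_dx_has_derivative[OF z] harmonic_on_dy_has_derivative[OF z]])
  moreover have "dy (dy f) z = - A"
    using harmonic z unfolding harmonic_on_def A_def by (simp add: eq_neg_iff_add_eq_0 add.commute)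
  ultimately show "(dx f has_derivative (\<lambda>h. Re h *\<^sub>R A + Im h *\<^sub>R B)) (at z)"
    and "(dy f has_derivative (\<lambda>h. Re h *\<^sub>R B - Im h *\<^sub>R A)) (at z)"
    using harmonic_on_dx_has_derivative[OF z] harmonic_on_dy_has_derivative[OF z]
    by (simp_all add: A_def B_def)
qed

lemma harmonic_on_holomorphic_dx_minus_dy: "(\<lambda>w. dx f w - \<i> * dy f w) holomorphic_on S"
proof -
  have "((\<lambda>w. dx f w - \<i> * dy f w) has_field_derivative (dx (dx f) z - \<i> * dx (dy f) z)) (at z)"
    if z: "z \<in> S" for z
    unfolding has_field_derivative_def
    using has_derivative_diff[OF harmonic_on_second_derivatives(1)[OF z]
        has_derivative_mult_right[OF harmonic_on_second_derivatives(2)[OF z], of \<i>]]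
    by (rule has_derivative_eq_rhs) (auto simp: fun_eq_iff complex_eq_iff algebra_simps)
  then show ?thesis
    by (meson field_differentiable_at_within field_differentiable_def holomorphic_on_def)
qed

lemma harmonic_on_holomorphic_cnj_dx_plus_dy: "(\<lambda>w. cnj (dx f w + \<i> * dy f w)) holomorphic_on S"
proof -
  have "((\<lambda>w. cnj (dx f w + \<i> * dy f w)) has_field_derivative cnj (dx (dx f) z + \<i> * dx (dy f) z)) (at z)"
    if z: "z \<in> S" for z
    unfolding has_field_derivative_def
    using bounded_linear.has_derivative[OF bounded_linear_cnj has_derivative_add[OF
        harmonic_on_second_derivatives(1)[OF z]
        has_derivative_mult_right[OF harmonic_on_second_derivatives(2)[OF z], of \<i>]]]
    by (rule has_derivative_eq_rhs) (auto simp: fun_eq_iff complex_eq_iff algebra_simps)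
  then show ?thesis
    by (meson field_differentiable_at_within field_differentiable_def holomorphic_on_def)
qed


lemma harmonic_on_holomorphic_decomposition:
  assumes convex: "convex S"
  obtains H1 H2 c where "H1 holomorphic_on S" "H2 holomorphic_on S"
    "\<And>z. z \<in> S \<Longrightarrow> f z = (H1 z + cnj (H2 z)) / 2 + c"
proof -
  obtain H1 where H1: "\<And>z. z \<in> S \<Longrightarrow> (H1 has_field_derivative dx f z - \<i> * dy f z) (at z)"
    using holomorphic_convex_primitive'[OF convex S harmonic_on_holomorphic_dx_minus_dy]
      at_within_open[OF _ S] by metis
  obtain H2 where H2: "\<And>z. z \<in> S \<Longrightarrow> (H2 has_field_derivative cnj (dx f z + \<i> * dy f z)) (at z)"
    using holomorphic_convex_primitive'[OF convex S harmonic_on_holomorphic_cnj_dx_plus_dy]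
      at_within_open[OF _ S] by metis
  have "\<exists>c. \<forall>z\<in>S. f z - (H1 z + cnj (H2 z)) / 2 = c"
  proof (rule has_derivative_zero_constant[OF convex])
    fix z assume z: "z \<in> S"
    have "((\<lambda>z. f z - (H1 z + cnj (H2 z)) / 2) has_derivative
        (\<lambda>h. (Re h *\<^sub>R dx f z + Im h *\<^sub>R dy f z)
             - ((dx f z - \<i> * dy f z) * h + cnj (cnj (dx f z + \<i> * dy f z) * h)) / 2)) (at z)"
    proof -
      have "((\<lambda>z. H1 z + cnj (H2 z)) has_derivative
          (\<lambda>h. (dx f z - \<i> * dy f z) * h + cnj (cnj (dx f z + \<i> * dy f z) * h))) (at z)"
        using H1[OF z] H2[OF z] unfolding has_field_derivative_def
        by (intro has_derivative_add bounded_linear.has_derivative[OF bounded_linear_cnj])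
      from bounded_linear.has_derivative[OF bounded_linear_divide[of 2] this]
      show ?thesis by (intro has_derivative_diff harmonic_on_has_derivative[OF z])
    qed
    moreover have "(\<lambda>h. (Re h *\<^sub>R dx f z + Im h *\<^sub>R dy f z)
             - ((dx f z - \<i> * dy f z) * h + cnj (cnj (dx f z + \<i> * dy f z) * h)) / 2) = (\<lambda>h. 0)"
      by (simp add: fun_eq_iff complex_eq_iff algebra_simps)
    ultimately show "((\<lambda>z. f z - (H1 z + cnj (H2 z)) / 2) has_derivative (\<lambda>h. 0)) (at z within S)"
      by (simp add: has_derivative_at_withinI)
  qed
  then obtain c where "\<And>z. z \<in> S \<Longrightarrow> f z - (H1 z + cnj (H2 z)) / 2 = c"
    by blast
  then have "\<And>z. z \<in> S \<Longrightarrow> f z = (H1 z + cnj (H2 z)) / 2 + c"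
    by (simp add: diff_eq_eq add.commute)
  moreover have "H1 holomorphic_on S" "H2 holomorphic_on S"
    using H1 H2 by (meson field_differentiable_at_within field_differentiable_def holomorphic_on_def)+
  ultimately show ?thesis using that by blast
qed

text \<open>After rotating by u = sgn (f w0), Re (cnj u * f) is the real part of a holomorphic function
  plus a constant and is maximal at w0, hence constant = |f w0|; as |cnj u * f| \<le> |f w0|, this
  forces cnj u * f = |f w0|.\<close>
lemma harmonic_on_maximum_modulus:
  assumes convex: "convex S" and w0: "w0 \<in> S" and max: "\<And>z. z \<in> S \<Longrightarrow> cmod (f z) \<le> cmod (f w0)"
    and z: "z \<in> S"
  shows "f z = f w0"
proof -
  define M where "M = cmod (f w0)"
  define u where "u = sgn (f w0)"
  obtain H1 H2 c where H: "H1 holomorphic_on S" "H2 holomorphic_on S"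
    and f: "\<And>z. z \<in> S \<Longrightarrow> f z = (H1 z + cnj (H2 z)) / 2 + c"
    using harmonic_on_holomorphic_decomposition[OF convex] by blast
  define G where "G z = (cnj u * H1 z + u * H2 z) / 2" for z
  have Re_G: "Re (cnj u * f z) = Re (G z) + Re (cnj u * c)" if "z \<in> S" for z
    by (simp add: f[OF that] G_def ring_distribs flip: complex_cnj_mult)
  have u_f_w0: "cnj u * f w0 = of_real M"
  proof -
    have "cnj (f w0) * f w0 = of_real (M * M)"
      using complex_norm_square[of "f w0"] by (simp add: M_def power2_eq_square mult.commute)
    then show ?thesis
      by (cases "M = 0") (simp_all add: u_def sgn_div_norm scaleR_conv_of_real mult.assoc field_simps flip: M_def)
  qed
  have bound: "cmod (cnj u * f z) \<le> M" if "z \<in> S" for z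
  proof -
    have "cmod (cnj u * f z) = cmod u * cmod (f z)" by (simp add: norm_mult)
    also have "\<dots> \<le> 1 * M"
      using max[OF that] by (intro mult_mono) (auto simp: u_def M_def norm_sgn)
    finally show ?thesis by simp
  qed
  have "Re (G z) = Re (G w0)"
  proof (rule holomorphic_Re_maximum[OF _ S convex_connected[OF convex] w0 _ z])
    show "G holomorphic_on S" unfolding G_def using H by (intro holomorphic_intros) auto
    fix y assume y: "y \<in> S"
    show "Re (G y) \<le> Re (G w0)"
      using Re_G[OF y] Re_G[OF w0] complex_Re_le_cmod[of "cnj u * f y"] bound[OF y] u_f_w0 by simp
  qed
  then have Re_z: "Re (cnj u * f z) = M" using Re_G[OF z] Re_G[OF w0] u_f_w0 by simp
  then have "cmod (cnj u * f z) = Re (cnj u * f z)"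
    using bound[OF z] complex_Re_le_cmod[of "cnj u * f z"] by linarith
  then have "cnj u * f z \<in> \<real>\<^sub>\<ge>\<^sub>0" using norm_eq_Re_iff by blast
  then have "cnj u * f z = cnj u * f w0"
    using Re_z u_f_w0 by (simp add: complex_nonneg_Reals_iff complex_eq_iff)
  moreover have "cnj u \<noteq> 0 \<or> f w0 = 0" by (simp add: u_def sgn_eq_0_iff)
  ultimately show ?thesis using max[OF z] by auto
qed

end

section \<open>Moebius transformations and cocompact lattices\<close>

lemma SU11_su_inv: "g \<in> SU11 \<Longrightarrow> su_inv g \<in> SU11"
  by (cases g) (auto simp: SU11_def su_inv_def)

lemma su_inv_su_inv: "su_inv (su_inv g) = g"
  by (cases g) (auto simp: su_inv_def)

lemma su_inv_su_mult: "su_inv (su_mult g h) = su_mult (su_inv h) (su_inv g)"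
  by (cases g; cases h) (auto simp: su_inv_def su_mult_def algebra_simps)

lemma SU11_norm_less:
  assumes "(a, b) \<in> SU11"
  shows "cmod b < cmod a"
proof -
  have "(cmod b)\<^sup>2 < (cmod a)\<^sup>2" using assms by (simp add: SU11_def)
  then show ?thesis using power_less_imp_less_base by fastforce
qed

lemma mob_denominator_nonzero:
  assumes "(a, b) \<in> SU11" "cmod w < 1"
  shows "cnj b * w + cnj a \<noteq> 0"
proof
  assume "cnj b * w + cnj a = 0"
  then have "cmod a = cmod b * cmod w" by (metis add_eq_0_iff complex_mod_cnj norm_minus_cancel norm_mult)
  also have "\<dots> \<le> cmod b" using assms(2) by (simp add: mult_left_le)
  finally show False using SU11_norm_less[OF assms(1)] by simp
qed

lemma mob_in_ball:
  assumes "g \<in> SU11" "cmod w < 1"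
  shows "cmod (mob g w) < 1"
proof (cases g)
  case (Pair a b)
  have "(cmod (a * w + b))\<^sup>2 - (cmod (cnj b * w + cnj a))\<^sup>2 = ((cmod a)\<^sup>2 - (cmod b)\<^sup>2) * ((cmod w)\<^sup>2 - 1)"
    unfolding cmod_power2 by (simp add: algebra_simps power2_eq_square)
  moreover have "(cmod w)\<^sup>2 < 1" "(cmod a)\<^sup>2 - (cmod b)\<^sup>2 = 1"
    using assms Pair by (simp_all add: power_less_one_iff SU11_def)
  ultimately have "(cmod (a * w + b))\<^sup>2 < (cmod (cnj b * w + cnj a))\<^sup>2"
    by simp
  then have "cmod (a * w + b) < cmod (cnj b * w + cnj a)"
    using power_less_imp_less_base by fastforce
  then show ?thesis
    using mob_denominator_nonzero assms Pair by (simp add: mob_def norm_divide divide_less_eq)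
qed

lemma mob_su_mult:
  assumes "h \<in> SU11" "cmod w < 1"
  shows "mob g (mob h w) = mob (su_mult g h) w"
proof (cases g; cases h)
  fix a1 b1 a2 b2 assume g: "g = (a1, b1)" and h: "h = (a2, b2)"
  have "cnj b2 * w + cnj a2 \<noteq> 0" using mob_denominator_nonzero assms h by blast
  moreover have "(x * (N / D) + y) / (u * (N / D) + v) = (x * N + y * D) / (u * N + v * D)"
    if "D \<noteq> 0" for x y u v N D :: complex
    using that by (simp add: divide_simps)
  ultimately have "mob g (mob h w) = (a1 * (a2 * w + b2) + b1 * (cnj b2 * w + cnj a2)) /
       (cnj b1 * (a2 * w + b2) + cnj a1 * (cnj b2 * w + cnj a2))"
    using g h by (simp add: mob_def)
  also have "\<dots> = mob (su_mult g h) w"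
    using g h by (simp add: mob_def su_mult_def algebra_simps)
  finally show ?thesis .
qed

lemma mob_surj_ball:
  assumes "cmod z < 1"
  shows "\<exists>g\<in>SU11. mob g 0 = z"
proof -
  define r where "r = 1 / sqrt (1 - (cmod z)\<^sup>2)"
  have pos: "1 - (cmod z)\<^sup>2 > 0" using assms by (simp add: power_less_one_iff)
  then have "r > 0" "r\<^sup>2 * (1 - (cmod z)\<^sup>2) = 1" by (simp_all add: r_def power_divide)
  then have "(of_real r, z * of_real r) \<in> SU11" "mob (of_real r, z * of_real r) 0 = z"
    by (simp_all add: SU11_def mob_def norm_mult power_mult_distrib algebra_simps)
  then show ?thesis by blast
qed

text \<open>Take D = K^-1 0: as SU(1,1) = K \<Gamma> acts transitively on the disc, every z = g 0 with
  g^-1 = k \<gamma> is z = \<gamma>^-1 (k^-1 0).\<close>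
lemma cocompact_lattice_disc_cover:
  assumes "cocompact_lattice \<Gamma>"
  obtains D where "compact D" "D \<noteq> {}" "D \<subseteq> ball 0 1"
    "\<And>z. z \<in> ball 0 1 \<Longrightarrow> \<exists>\<gamma>\<in>\<Gamma>. \<exists>d\<in>D. z = mob (su_inv \<gamma>) d"
proof -
  obtain K where \<Gamma>: "\<Gamma> \<subseteq> SU11" and K: "compact K" "K \<subseteq> SU11"
    and cover: "\<And>g. g \<in> SU11 \<Longrightarrow> \<exists>k\<in>K. \<exists>\<gamma>\<in>\<Gamma>. g = su_mult k \<gamma>"
    using assms unfolding cocompact_lattice_def by blast
  define D where "D = (\<lambda>k. mob (su_inv k) 0) ` K"
  have "D = (\<lambda>k. - snd k / fst k) ` K"
    unfolding D_def by (intro image_cong refl) (auto simp: mob_def su_inv_def split: prod.splits)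
  moreover have "continuous_on K (\<lambda>k. - snd k / fst k)"
    using K(2) SU11_norm_less by (intro continuous_intros) fastforce
  ultimately have "compact D" using K(1) compact_continuous_image by metis
  moreover have "(1, 0) \<in> SU11" by (simp add: SU11_def)
  then have "D \<noteq> {}" using cover unfolding D_def by blast
  moreover have "D \<subseteq> ball 0 1" unfolding D_def using mob_in_ball[OF SU11_su_inv, of _ 0] K(2) by auto
  moreover have "\<exists>\<gamma>\<in>\<Gamma>. \<exists>d\<in>D. z = mob (su_inv \<gamma>) d" if z: "z \<in> ball 0 1" for z
  proof -
    obtain g where g: "g \<in> SU11" "mob g 0 = z" using mob_surj_ball[of z] z by auto
    obtain k \<gamma> where k: "k \<in> K" "\<gamma> \<in> \<Gamma>" "su_inv g = su_mult k \<gamma>"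
      using cover[OF SU11_su_inv[OF g(1)]] by blast
    then have "g = su_mult (su_inv \<gamma>) (su_inv k)" by (metis su_inv_su_inv su_inv_su_mult)
    moreover have "mob (su_inv \<gamma>) (mob (su_inv k) 0) = mob (su_mult (su_inv \<gamma>) (su_inv k)) 0"
      using k \<Gamma> K(2) by (intro mob_su_mult SU11_su_inv) auto
    ultimately have "z = mob (su_inv \<gamma>) (mob (su_inv k) 0)" using g(2) by simp
    then show ?thesis using k unfolding D_def by blast
  qed
  ultimately show ?thesis using that by blast
qed

section \<open>The topology of locally uniform convergence\<close>

lemma openin_lu_topology:
  "openin lu_topology U \<longleftrightarrow> (\<forall>\<phi>\<in>U. \<exists>K e. compact K \<and> K \<subseteq> ball 0 1 \<and> e > 0 \<and>
      {\<psi>. \<forall>z\<in>K. cmod (\<psi> z - \<phi> z) < e} \<subseteq> U)"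
proof -
  have "istopology (\<lambda>U :: (complex \<Rightarrow> complex) set. \<forall>\<phi>\<in>U. \<exists>K e. compact K \<and> K \<subseteq> ball 0 1 \<and> e > 0 \<and>
      {\<psi>. \<forall>z\<in>K. cmod (\<psi> z - \<phi> z) < e} \<subseteq> U)"
    unfolding istopology_def
  proof (intro conjI allI impI ballI)
    fix S T :: "(complex \<Rightarrow> complex) set" and \<phi>
    assume S: "\<forall>\<phi>\<in>S. \<exists>K e. compact K \<and> K \<subseteq> ball 0 1 \<and> e > 0 \<and> {\<psi>. \<forall>z\<in>K. cmod (\<psi> z - \<phi> z) < e} \<subseteq> S"
      and T: "\<forall>\<phi>\<in>T. \<exists>K e. compact K \<and> K \<subseteq> ball 0 1 \<and> e > 0 \<and> {\<psi>. \<forall>z\<in>K. cmod (\<psi> z - \<phi> z) < e} \<subseteq> T"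
      and \<phi>: "\<phi> \<in> S \<inter> T"
    obtain K1 e1 where K1: "compact K1" "K1 \<subseteq> ball 0 1" "e1 > 0"
        "{\<psi>. \<forall>z\<in>K1. cmod (\<psi> z - \<phi> z) < e1} \<subseteq> S"
      using bspec[OF S IntD1[OF \<phi>]] by meson
    obtain K2 e2 where K2: "compact K2" "K2 \<subseteq> ball 0 1" "e2 > 0"
        "{\<psi>. \<forall>z\<in>K2. cmod (\<psi> z - \<phi> z) < e2} \<subseteq> T"
      using bspec[OF T IntD2[OF \<phi>]] by meson
    have "{\<psi>. \<forall>z\<in>K1 \<union> K2. cmod (\<psi> z - \<phi> z) < min e1 e2} \<subseteq> S \<inter> T"
      using K1(4) K2(4) by force
    then show "\<exists>K e. compact K \<and> K \<subseteq> ball 0 1 \<and> e > 0 \<and> {\<psi>. \<forall>z\<in>K. cmod (\<psi> z - \<phi> z) < e} \<subseteq> S \<inter> T"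
      using K1 K2 by (intro exI[of _ "K1 \<union> K2"] exI[of _ "min e1 e2"]) (simp add: compact_Un)
  next
    fix \<K> :: "(complex \<Rightarrow> complex) set set" and \<phi>
    assume \<K>: "\<forall>S\<in>\<K>. \<forall>\<phi>\<in>S. \<exists>K e. compact K \<and> K \<subseteq> ball 0 1 \<and> e > 0 \<and> {\<psi>. \<forall>z\<in>K. cmod (\<psi> z - \<phi> z) < e} \<subseteq> S"
      and "\<phi> \<in> \<Union>\<K>"
    then obtain S where "S \<in> \<K>" "\<phi> \<in> S" by blast
    then obtain K e where "compact K" "K \<subseteq> ball 0 1" "e > 0" "{\<psi>. \<forall>z\<in>K. cmod (\<psi> z - \<phi> z) < e} \<subseteq> S"
      using \<K> by meson
    with \<open>S \<in> \<K>\<close> show "\<exists>K e. compact K \<and> K \<subseteq> ball 0 1 \<and> e > 0 \<and> {\<psi>. \<forall>z\<in>K. cmod (\<psi> z - \<phi> z) < e} \<subseteq> \<Union>\<K>"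
      by (meson Union_upper order_trans)
  qed
  then show ?thesis unfolding lu_topology_def by simp
qed

lemma openin_lu_topology_uniform_ball:
  assumes D: "compact D" "D \<subseteq> ball 0 1"
  shows "openin lu_topology {\<psi>. \<exists>e'<e. \<forall>w\<in>D. cmod (\<psi> w - \<phi> w) \<le> e'}"
  unfolding openin_lu_topology
proof
  fix \<psi> assume "\<psi> \<in> {\<psi>. \<exists>e'<e. \<forall>w\<in>D. cmod (\<psi> w - \<phi> w) \<le> e'}"
  then obtain e' where e': "e' < e" "\<And>w. w \<in> D \<Longrightarrow> cmod (\<psi> w - \<phi> w) \<le> e'" by blast
  have near: "\<rho> \<in> {\<psi>. \<exists>e'<e. \<forall>w\<in>D. cmod (\<psi> w - \<phi> w) \<le> e'}"
    if \<rho>: "\<forall>w\<in>D. cmod (\<rho> w - \<psi> w) < (e - e') / 2" for \<rho>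
  proof -
    have "cmod (\<rho> w - \<phi> w) \<le> (e + e') / 2" if w: "w \<in> D" for w
    proof -
      have "cmod (\<rho> w - \<phi> w) \<le> cmod (\<rho> w - \<psi> w) + cmod (\<psi> w - \<phi> w)"
        using norm_triangle_ineq[of "\<rho> w - \<psi> w" "\<psi> w - \<phi> w"] by simp
      then show ?thesis using \<rho> e'(2)[OF w] w by fastforce
    qed
    moreover have "(e + e') / 2 < e" using e'(1) by simp
    ultimately show ?thesis by blast
  qed
  show "\<exists>K r. compact K \<and> K \<subseteq> ball 0 1 \<and> r > 0 \<and>
      {\<rho>. \<forall>z\<in>K. cmod (\<rho> z - \<psi> z) < r} \<subseteq> {\<psi>. \<exists>e'<e. \<forall>w\<in>D. cmod (\<psi> w - \<phi> w) \<le> e'}"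
  proof (intro exI[of _ D] exI[of _ "(e - e') / 2"] conjI D subsetI)
    show "(e - e') / 2 > 0" using e'(1) by simp
  qed (use near in blast)
qed

definition sup_norm_on :: "complex set \<Rightarrow> (complex \<Rightarrow> complex) \<Rightarrow> real" where
  "sup_norm_on D \<psi> = (SUP w\<in>D. cmod (\<psi> w))"

lemma norm_le_sup_norm_on:
  assumes "compact D" "continuous_on D \<psi>" "w \<in> D"
  shows "cmod (\<psi> w) \<le> sup_norm_on D \<psi>"
proof -
  have "compact ((\<lambda>w. cmod (\<psi> w)) ` D)"
    using assms by (intro compact_continuous_image continuous_intros)
  then show ?thesis
    unfolding sup_norm_on_def using assms(3) by (intro cSUP_upper bounded_imp_bdd_above compact_imp_bounded)
qed

lemma sup_norm_on_le:
  "D \<noteq> {} \<Longrightarrow> (\<And>w. w \<in> D \<Longrightarrow> cmod (\<psi> w) \<le> B) \<Longrightarrow> sup_norm_on D \<psi> \<le> B"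
  unfolding sup_norm_on_def by (rule cSUP_least)

lemma sup_norm_on_attained:
  assumes "compact D" "D \<noteq> {}" "continuous_on D \<psi>"
  obtains w where "w \<in> D" "sup_norm_on D \<psi> = cmod (\<psi> w)"
proof -
  have "compact ((\<lambda>w. cmod (\<psi> w)) ` D)"
    using assms by (intro compact_continuous_image continuous_intros)
  from compact_attains_sup[OF this] obtain w where "w \<in> D" "\<And>y. y \<in> D \<Longrightarrow> cmod (\<psi> y) \<le> cmod (\<psi> w)"
    using assms(2) by blast
  then show ?thesis
    using that norm_le_sup_norm_on[OF assms(1,3)] sup_norm_on_le[OF assms(2)] by (meson order_antisym)
qed

lemma continuous_map_sup_norm_on:
  assumes D: "compact D" "D \<subseteq> ball 0 1" "D \<noteq> {}" and cont: "\<And>\<psi>. \<psi> \<in> V \<Longrightarrow> continuous_on D \<psi>"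
  shows "continuous_map (subtopology lu_topology V) euclideanreal (sup_norm_on D)"
  unfolding Met_TC.continuous_map_to_metric[simplified]
proof (intro ballI allI impI)
  fix \<phi> and e :: real assume "\<phi> \<in> topspace (subtopology lu_topology V)" "e > 0"
  then have \<phi>: "\<phi> \<in> V" by simp
  define U where "U = {\<psi>. \<exists>e'<e. \<forall>w\<in>D. cmod (\<psi> w - \<phi> w) \<le> e'}"
  have "\<bar>sup_norm_on D \<phi> - sup_norm_on D \<psi>\<bar> < e" if \<psi>: "\<psi> \<in> U \<inter> V" for \<psi>
  proof -
    obtain e' where e': "e' < e" "\<And>w. w \<in> D \<Longrightarrow> cmod (\<psi> w - \<phi> w) \<le> e'"
      using \<psi> unfolding U_def by blast
    have "sup_norm_on D \<psi> \<le> sup_norm_on D \<phi> + e'"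
    proof (rule sup_norm_on_le[OF D(3)])
      fix w assume w: "w \<in> D"
      show "cmod (\<psi> w) \<le> sup_norm_on D \<phi> + e'"
        using norm_triangle_ineq2[of "\<psi> w" "\<phi> w"] e'(2)[OF w] norm_le_sup_norm_on[OF D(1) cont[OF \<phi>] w]
        by linarith
    qed
    moreover have "sup_norm_on D \<phi> \<le> sup_norm_on D \<psi> + e'"
    proof (rule sup_norm_on_le[OF D(3)])
      fix w assume w: "w \<in> D"
      have "continuous_on D \<psi>" using \<psi> cont by blast
      moreover have "cmod (\<phi> w - \<psi> w) \<le> e'" using e'(2)[OF w] by (simp add: norm_minus_commute)
      ultimately show "cmod (\<phi> w) \<le> sup_norm_on D \<psi> + e'"
        using norm_triangle_ineq2[of "\<phi> w" "\<psi> w"] norm_le_sup_norm_on[OF D(1) _ w] by fastforce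
    qed
    ultimately show ?thesis using e'(1) by linarith
  qed
  moreover have "openin (subtopology lu_topology V) (U \<inter> V)"
    unfolding U_def by (intro openin_subtopology_Int openin_lu_topology_uniform_ball D)
  moreover have "\<phi> \<in> U \<inter> V" using \<phi> \<open>e > 0\<close> by (auto simp: U_def)
  ultimately show "\<exists>U. openin (subtopology lu_topology V) U \<and> \<phi> \<in> U \<and>
      (\<forall>\<psi>\<in>U. dist (sup_norm_on D \<phi>) (sup_norm_on D \<psi>) < e)"
    unfolding dist_real_def by blast
qed

lemma sup_norm_on_maximum_on_compactin:
  assumes V: "compactin lu_topology V" "V \<noteq> {}" and D: "compact D" "D \<subseteq> ball 0 1" "D \<noteq> {}"
    and cont: "\<And>\<psi>. \<psi> \<in> V \<Longrightarrow> continuous_on D \<psi>"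
  obtains \<psi>0 where "\<psi>0 \<in> V" "\<And>\<psi>. \<psi> \<in> V \<Longrightarrow> sup_norm_on D \<psi> \<le> sup_norm_on D \<psi>0"
proof -
  have "continuous_map (subtopology lu_topology V) euclideanreal (sup_norm_on D)"
    by (rule continuous_map_sup_norm_on[OF D cont])
  moreover have "compactin (subtopology lu_topology V) V" using V(1) by (simp add: compactin_subtopology)
  ultimately have "compact (sup_norm_on D ` V)"
    using image_compactin[of "subtopology lu_topology V" V euclideanreal] by simp
  then have "\<exists>\<psi>0\<in>V. \<forall>\<psi>\<in>V. sup_norm_on D \<psi> \<le> sup_norm_on D \<psi>0"
    using compact_attains_sup[of "sup_norm_on D ` V"] V(2) by simp
  then show ?thesis using that by blast
qed

lemma norm_le_sup_norm_on_translates: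
  assumes cover: "\<exists>\<gamma>\<in>\<Gamma>. \<exists>d\<in>D. z = mob (su_inv \<gamma>) d" and "compact D"
    and invariant: "\<And>\<gamma>. \<gamma> \<in> \<Gamma> \<Longrightarrow> \<psi> \<circ> mob (su_inv \<gamma>) \<in> V"
    and cont: "\<And>\<phi>. \<phi> \<in> V \<Longrightarrow> continuous_on D \<phi>"
    and bound: "\<And>\<phi>. \<phi> \<in> V \<Longrightarrow> sup_norm_on D \<phi> \<le> B"
  shows "cmod (\<psi> z) \<le> B"
proof -
  obtain \<gamma> d where \<gamma>: "\<gamma> \<in> \<Gamma>" "d \<in> D" "z = mob (su_inv \<gamma>) d" using cover by blast
  have "cmod (\<psi> z) = cmod ((\<psi> \<circ> mob (su_inv \<gamma>)) d)" using \<gamma>(3) by simp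
  also have "\<dots> \<le> sup_norm_on D (\<psi> \<circ> mob (su_inv \<gamma>))"
    using norm_le_sup_norm_on[OF \<open>compact D\<close> cont[OF invariant[OF \<gamma>(1)]] \<gamma>(2)] .
  also have "\<dots> \<le> B" using bound[OF invariant[OF \<gamma>(1)]] .
  finally show ?thesis .
qed

theorem mainTheorem10:
  fixes \<Gamma> :: "(complex \<times> complex) set"
  assumes "cocompact_lattice \<Gamma>"
  shows "\<not> (\<exists>V. V \<noteq> {} \<and> V \<subseteq> Har_star \<and> compactin lu_topology V \<and>
              (\<forall>\<phi>\<in>V. \<forall>\<gamma>\<in>\<Gamma>. \<phi> \<circ> mob (su_inv \<gamma>) \<in> V))"
proof
  assume "\<exists>V. V \<noteq> {} \<and> V \<subseteq> Har_star \<and> compactin lu_topology V \<and>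
              (\<forall>\<phi>\<in>V. \<forall>\<gamma>\<in>\<Gamma>. \<phi> \<circ> mob (su_inv \<gamma>) \<in> V)"
  then obtain V where V: "V \<noteq> {}" "V \<subseteq> Har_star" "compactin lu_topology V"
    and invariant: "\<And>\<phi> \<gamma>. \<phi> \<in> V \<Longrightarrow> \<gamma> \<in> \<Gamma> \<Longrightarrow> \<phi> \<circ> mob (su_inv \<gamma>) \<in> V" by blast
  obtain D where D: "compact D" "D \<noteq> {}" "D \<subseteq> ball 0 1"
    and cover: "\<And>z. z \<in> ball 0 1 \<Longrightarrow> \<exists>\<gamma>\<in>\<Gamma>. \<exists>d\<in>D. z = mob (su_inv \<gamma>) d"
    using cocompact_lattice_disc_cover[OF assms] by blast
  have harmonic: "harmonic_on \<psi> (ball 0 1)" if "\<psi> \<in> V" for \<psi>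
    using V(2) that by (auto simp: Har_star_def Har_def)
  have cont: "continuous_on D \<psi>" if "\<psi> \<in> V" for \<psi>
    using harmonic_on_imp_continuous_on[OF harmonic[OF that]] D(3) by (auto intro: continuous_on_subset)
  obtain \<psi>0 where \<psi>0: "\<psi>0 \<in> V" and max: "\<And>\<psi>. \<psi> \<in> V \<Longrightarrow> sup_norm_on D \<psi> \<le> sup_norm_on D \<psi>0"
    using sup_norm_on_maximum_on_compactin[OF V(3,1) D(1,3,2) cont] by blast
  obtain w0 where w0: "w0 \<in> D" "sup_norm_on D \<psi>0 = cmod (\<psi>0 w0)"
    using sup_norm_on_attained[OF D(1,2) cont[OF \<psi>0]] by blast
  have "cmod (\<psi>0 z) \<le> cmod (\<psi>0 w0)" if "z \<in> ball 0 1" for z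
    using norm_le_sup_norm_on_translates[OF cover[OF that] D(1) invariant[OF \<psi>0] cont] max w0(2) by simp
  then have "\<forall>z\<in>ball 0 1. \<psi>0 z = \<psi>0 w0"
    using harmonic_on_maximum_modulus[OF harmonic[OF \<psi>0] open_ball convex_ball] w0(1) D(3) by blast
  moreover have "\<psi>0 \<in> Har_star" using V(2) \<psi>0 by blast
  ultimately show False unfolding Har_star_def by blast
qed

end
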